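(* Let $A,B$ be unital Banach algebras and let $X$ be a Banach space which is simultaneously a left Banach $A$-module that is a left function module over $A$, and a right Banach $B$-module that is a right function module over $B$ (no compatibility between the two actions is assumed). Then $(a\cdot x)\cdot b=a\cdot(x\cdot b)$ for all $a\in A$, $x\in X$, $b\in B$; i.e. the two actions make $X$ an $A$-$B$-bimodule.
   Context: A unital Banach algebra has a unit of norm 1. A left Banach $A$-module is a Banach space $X$ with left action satisfying $1\cdot x=x$ and $\|a\cdot x\|\le\|a\|\|x\|$; right Banach modules analogously. $X$ is a left (resp. right) function module over $A$ (resp. $B$) if there exist a compact Hausdorff space $K$, a linear isometry $i\colon X\to C(K)$ and a contractive unital homomorphism $\theta$ from $A$ (resp. $B$) to $C(K)$ with $i(a\cdot x)=\theta(a)i(x)$ (resp. $i(x\cdot b)=i(x)\theta(b)$). *)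

theory Defs
  imports "HOL-Analysis.Analysis"
begin

text \<open>Complex Banach spaces are modelled as real Banach spaces (type class banach)
  together with a complex scalar multiplication extending the real one.\<close>

definition complex_banach_space :: "(complex \<Rightarrow> 'x::banach \<Rightarrow> 'x) \<Rightarrow> bool" where
  "complex_banach_space sm \<longleftrightarrow>
     (\<forall>r x. sm (complex_of_real r) x = scaleR r x) \<and>
     (\<forall>c d x. sm (c * d) x = sm c (sm d x)) \<and>
     (\<forall>c d x. sm (c + d) x = sm c x + sm d x) \<and>
     (\<forall>c x y. sm c (x + y) = sm c x + sm c y) \<and>
     (\<forall>c x. norm (sm c x) = cmod c * norm x)"

text \<open>Unital complex Banach algebra: the class real_normed_algebra_1 gives a
  submultiplicative norm and a unit of norm 1.\<close>

definition unital_complex_banach_algebra ::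
    "(complex \<Rightarrow> 'a::{real_normed_algebra_1,banach} \<Rightarrow> 'a) \<Rightarrow> bool" where
  "unital_complex_banach_algebra sm \<longleftrightarrow>
     complex_banach_space sm \<and>
     (\<forall>c a b. sm c (a * b) = sm c a * b \<and> sm c (a * b) = a * sm c b)"

definition left_banach_module ::
    "(complex \<Rightarrow> 'a::{real_normed_algebra_1,banach} \<Rightarrow> 'a) \<Rightarrow> (complex \<Rightarrow> 'x::banach \<Rightarrow> 'x)
     \<Rightarrow> ('a \<Rightarrow> 'x \<Rightarrow> 'x) \<Rightarrow> bool" where
  "left_banach_module smA smX act \<longleftrightarrow>
     (\<forall>a b x. act (a + b) x = act a x + act b x) \<and>
     (\<forall>a x y. act a (x + y) = act a x + act a y) \<and>
     (\<forall>c a x. act (smA c a) x = smX c (act a x)) \<and>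
     (\<forall>c a x. act a (smX c x) = smX c (act a x)) \<and>
     (\<forall>a b x. act (a * b) x = act a (act b x)) \<and>
     (\<forall>x. act 1 x = x) \<and>
     (\<forall>a x. norm (act a x) \<le> norm a * norm x)"

definition right_banach_module ::
    "(complex \<Rightarrow> 'b::{real_normed_algebra_1,banach} \<Rightarrow> 'b) \<Rightarrow> (complex \<Rightarrow> 'x::banach \<Rightarrow> 'x)
     \<Rightarrow> ('x \<Rightarrow> 'b \<Rightarrow> 'x) \<Rightarrow> bool" where
  "right_banach_module smB smX act \<longleftrightarrow>
     (\<forall>x a b. act x (a + b) = act x a + act x b) \<and>
     (\<forall>x y a. act (x + y) a = act x a + act y a) \<and>
     (\<forall>c x a. act x (smB c a) = smX c (act x a)) \<and>
     (\<forall>c x a. act (smX c x) a = smX c (act x a)) \<and>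
     (\<forall>x a b. act x (a * b) = act (act x a) b) \<and>
     (\<forall>x. act x 1 = x) \<and>
     (\<forall>x a. norm (act x a) \<le> norm x * norm a)"

text \<open>C(K) for a compact Hausdorff space K (given as a type with its topology):
  bounded continuous complex functions (bounded continuous functions, type bcontfun) with the sup norm;
  on compact K these are exactly all continuous functions.\<close>

definition complex_linear_isometry_into_CK ::
    "(complex \<Rightarrow> 'x::banach \<Rightarrow> 'x) \<Rightarrow> ('x \<Rightarrow> ('k::topological_space \<Rightarrow>\<^sub>C complex)) \<Rightarrow> bool" where
  "complex_linear_isometry_into_CK smX i \<longleftrightarrow>
     (\<forall>x y. i (x + y) = i x + i y) \<and>
     (\<forall>c x t. apply_bcontfun (i (smX c x)) t = c * apply_bcontfun (i x) t) \<and>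
     (\<forall>x. norm (i x) = norm x)"

definition contractive_unital_hom_into_CK ::
    "(complex \<Rightarrow> 'a::{real_normed_algebra_1,banach} \<Rightarrow> 'a)
     \<Rightarrow> ('a \<Rightarrow> ('k::topological_space \<Rightarrow>\<^sub>C complex)) \<Rightarrow> bool" where
  "contractive_unital_hom_into_CK smA \<theta> \<longleftrightarrow>
     (\<forall>a b. \<theta> (a + b) = \<theta> a + \<theta> b) \<and>
     (\<forall>c a t. apply_bcontfun (\<theta> (smA c a)) t = c * apply_bcontfun (\<theta> a) t) \<and>
     (\<forall>a b t. apply_bcontfun (\<theta> (a * b)) t = apply_bcontfun (\<theta> a) t * apply_bcontfun (\<theta> b) t) \<and>
     (\<forall>t. apply_bcontfun (\<theta> 1) t = 1) \<and>
     (\<forall>a. norm (\<theta> a) \<le> norm a)"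

text \<open>The existential over K in the paper becomes a universally quantified type
  variable in the theorem (it occurs only in the hypotheses).\<close>

definition left_function_module_on ::
    "'k::t2_space itself \<Rightarrow> (complex \<Rightarrow> 'a::{real_normed_algebra_1,banach} \<Rightarrow> 'a)
     \<Rightarrow> (complex \<Rightarrow> 'x::banach \<Rightarrow> 'x) \<Rightarrow> ('a \<Rightarrow> 'x \<Rightarrow> 'x) \<Rightarrow> bool" where
  "left_function_module_on _ smA smX act \<longleftrightarrow>
     compact (UNIV :: 'k set) \<and>
     (\<exists>(i :: 'x \<Rightarrow> ('k \<Rightarrow>\<^sub>C complex)) (\<theta> :: 'a \<Rightarrow> ('k \<Rightarrow>\<^sub>C complex)).
        complex_linear_isometry_into_CK smX i \<and> contractive_unital_hom_into_CK smA \<theta> \<and>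
        (\<forall>a x t. apply_bcontfun (i (act a x)) t = apply_bcontfun (\<theta> a) t * apply_bcontfun (i x) t))"

definition right_function_module_on ::
    "'k::t2_space itself \<Rightarrow> (complex \<Rightarrow> 'b::{real_normed_algebra_1,banach} \<Rightarrow> 'b)
     \<Rightarrow> (complex \<Rightarrow> 'x::banach \<Rightarrow> 'x) \<Rightarrow> ('x \<Rightarrow> 'b \<Rightarrow> 'x) \<Rightarrow> bool" where
  "right_function_module_on _ smB smX act \<longleftrightarrow>
     compact (UNIV :: 'k set) \<and>
     (\<exists>(i :: 'x \<Rightarrow> ('k \<Rightarrow>\<^sub>C complex)) (\<theta> :: 'b \<Rightarrow> ('k \<Rightarrow>\<^sub>C complex)).
        complex_linear_isometry_into_CK smX i \<and> contractive_unital_hom_into_CK smB \<theta> \<and>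
        (\<forall>x b t. apply_bcontfun (i (act x b)) t = apply_bcontfun (i x) t * apply_bcontfun (\<theta> b) t))"

end

theory Submission
  imports Defs
begin

text \<open>Represent X in C(K2), where right multiplication S by b is multiplication by
  the function \<theta>2(b). Left multiplication T by a is multiplication by a function of
  modulus at most norm a in the other representation C(K1); since both representations
  are isometric, a Cauchy-Schwarz argument transfers this to C(K2) in a weak form: sums
  of squared moduli of the values of T u, v1, ..., vn at any point t are dominated by
  those of (norm a) u, v1, ..., vn at some point s. By Zorn's lemma and compactness
  there is a minimal closed nonempty set E, inside the peak set of y = T(S x) - S(T x),
  on which this domination holds with s in E. Minimality makes the modulus of every
  element constant on E, so at a point t0 of E the value of T u is a fixed multiple of
  the value of u. Hence T and the multiplication operator S commute at t0, which gives
  norm y = |y(t0)| = 0.\<close>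

lemma bcontfun_norm_attained:
  fixes f :: "'k::topological_space \<Rightarrow>\<^sub>C 'b::real_normed_vector"
  assumes "compact (UNIV :: 'k set)"
  shows "\<exists>t. norm (apply_bcontfun f t) = norm f"
proof -
  obtain t where t: "\<And>s. norm (apply_bcontfun f s) \<le> norm (apply_bcontfun f t)"
    using continuous_attains_sup[OF assms, of "\<lambda>s. norm (apply_bcontfun f s)"]
    by (auto intro!: continuous_intros)
  have "norm f \<le> norm (apply_bcontfun f t)"
    using dist_bound[of f 0] t by (simp add: dist_norm)
  with norm_bounded[of f t] show ?thesis by (intro exI[of _ t]) simp
qed

lemma closed_chain_Inter_nonempty:
  fixes \<F> :: "'a::topological_space set set"
  assumes "compact (UNIV :: 'a set)"
    and "\<And>S. S \<in> \<F> \<Longrightarrow> closed S" "{} \<notin> \<F>" "chain\<^sub>\<subseteq> \<F>"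
  shows "\<Inter>\<F> \<noteq> {}"
proof -
  have "UNIV \<inter> \<Inter>\<F> \<noteq> {}"
  proof (rule compact_imp_fip[OF assms(1)])
    fix \<G> assume \<G>: "finite \<G>" "\<G> \<subseteq> \<F>"
    show "UNIV \<inter> \<Inter>\<G> \<noteq> {}"
    proof (cases "\<G> = {}")
      case False
      with \<G> assms(4) have "\<Inter>\<G> \<in> \<G>"
        by (intro Inter_in_chain[of _ UNIV]) (auto simp: chain_subset_def subset_chain_def)
      with \<G> assms(3) show ?thesis by auto
    qed simp
  qed (use assms(2) in auto)
  then show ?thesis by simp
qed

lemma subset_Zorn_minimal:
  assumes "\<A> \<noteq> {}"
    and ch: "\<And>\<C>. \<C> \<noteq> {} \<Longrightarrow> \<C> \<subseteq> \<A> \<Longrightarrow> chain\<^sub>\<subseteq> \<C> \<Longrightarrow> \<Inter>\<C> \<in> \<A>"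
  shows "\<exists>M\<in>\<A>. \<forall>X\<in>\<A>. X \<subseteq> M \<longrightarrow> X = M"
proof -
  have "\<exists>M\<in>uminus ` \<A>. \<forall>X\<in>uminus ` \<A>. M \<subseteq> X \<longrightarrow> X = M"
  proof (rule subset_Zorn_nonempty)
    fix \<C> assume "\<C> \<noteq> {}" "subset.chain (uminus ` \<A>) \<C>"
    then have "\<Inter>(uminus ` \<C>) \<in> \<A>"
      by (intro ch) (auto simp: subset_chain_def chain_subset_def)
    moreover have "\<Union>\<C> = - \<Inter>(uminus ` \<C>)" by auto
    ultimately show "\<Union>\<C> \<in> uminus ` \<A>" by blast
  qed (use assms(1) in simp)
  then obtain M' where M': "M' \<in> uminus ` \<A>" "\<forall>X\<in>uminus ` \<A>. M' \<subseteq> X \<longrightarrow> X = M'" ..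
  then obtain M where M: "M \<in> \<A>" "M' = - M" by blast
  show ?thesis
  proof (intro bexI[OF _ M(1)] ballI impI)
    fix X assume "X \<in> \<A>" "X \<subseteq> M"
    then have "- X = M'" using M' M(2) by blast
    then show "X = M" using M(2) by simp
  qed
qed

locale CK_representation =
  fixes smX :: "complex \<Rightarrow> 'x::banach \<Rightarrow> 'x"
    and i :: "'x \<Rightarrow> ('k::topological_space \<Rightarrow>\<^sub>C complex)"
  assumes isometry: "complex_linear_isometry_into_CK smX i"
    and compact_UNIV: "compact (UNIV :: 'k set)"
begin

abbreviation I :: "'x \<Rightarrow> 'k \<Rightarrow> complex" where
  "I x \<equiv> apply_bcontfun (i x)"

lemma I_add: "I (x + y) t = I x t + I y t"
  using isometry by (simp add: complex_linear_isometry_into_CK_def plus_bcontfun.rep_eq)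

lemma I_scale: "I (smX c x) t = c * I x t"
  using isometry by (simp add: complex_linear_isometry_into_CK_def)

lemma I_diff: "I (x - y) t = I x t - I y t"
  using I_add[of "x - y" y t] by simp

lemma I_zero: "I 0 t = 0"
  using I_add[of 0 0 t] by simp

lemma I_sum: "I (\<Sum>k\<in>A. x k) t = (\<Sum>k\<in>A. I (x k) t)"
  by (induction A rule: infinite_finite_induct) (simp_all add: I_zero I_add)

lemma norm_I_le: "cmod (I x t) \<le> norm x"
  using isometry norm_bounded[of "i x" t] by (simp add: complex_linear_isometry_into_CK_def)

lemma norm_attained: "\<exists>t. cmod (I x t) = norm x"
  using isometry bcontfun_norm_attained[OF compact_UNIV, of "i x"]
  by (simp add: complex_linear_isometry_into_CK_def)

definition sq_norms :: "(nat \<Rightarrow> 'x) \<Rightarrow> nat \<Rightarrow> 'k \<Rightarrow> real" where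
  "sq_norms v n t = (\<Sum>k<n. (cmod (I (v k) t))\<^sup>2)"

lemma sq_norms_nonneg: "0 \<le> sq_norms v n t"
  by (simp add: sq_norms_def sum_nonneg)

lemma continuous_on_sq_norms [continuous_intros]: "continuous_on S (sq_norms v n)"
  unfolding sq_norms_def by (intro continuous_intros) simp

lemma sq_norms_Cons: "sq_norms (case_nat x v) (Suc n) t = (cmod (I x t))\<^sup>2 + sq_norms v n t"
  unfolding sq_norms_def sum.lessThan_Suc_shift by simp

lemma sq_norms_snoc: "sq_norms (v(n := x)) (Suc n) t = sq_norms v n t + (cmod (I x t))\<^sup>2"
  by (simp add: sq_norms_def)

text \<open>A weak form of ``T acts on E as multiplication by a function of modulus at most r''.
  The auxiliary finite family v makes the property survive restriction to peak sets.\<close>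

definition controlled_on :: "('x \<Rightarrow> 'x) \<Rightarrow> real \<Rightarrow> 'k set \<Rightarrow> bool" where
  "controlled_on T r E \<longleftrightarrow> (\<forall>u v n. \<forall>t\<in>E. \<exists>s\<in>E.
     (cmod (I (T u) t))\<^sup>2 + sq_norms v n t \<le> r\<^sup>2 * (cmod (I u s))\<^sup>2 + sq_norms v n s)"

end

lemma sq_norms_transfer:
  assumes "CK_representation smX i" and "CK_representation smX j"
  shows "\<exists>s. CK_representation.sq_norms i w n t \<le> CK_representation.sq_norms j w n s"
proof -
  interpret i: CK_representation smX i by fact
  interpret j: CK_representation smX j by fact
  define A where "A = i.sq_norms w n t"
  \<comment> \<open>z has value A at t in the first representation; evaluating it at a norming point s
    of the second one and using Cauchy-Schwarz gives A \<le> sqrt A * sqrt B.\<close>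
  define z where "z = (\<Sum>k<n. smX (cnj (i.I (w k) t)) (w k))"
  have "i.I z t = (\<Sum>k<n. cnj (i.I (w k) t) * i.I (w k) t)"
    by (simp add: z_def i.I_sum i.I_scale)
  also have "\<dots> = of_real A"
    by (simp add: A_def i.sq_norms_def mult.commute flip: complex_norm_square)
  finally have "A \<le> norm z"
    using i.norm_I_le[of z t] i.sq_norms_nonneg[of w n t] by (simp add: A_def)
  obtain s where s: "cmod (j.I z s) = norm z"
    using j.norm_attained by blast
  define B where "B = j.sq_norms w n s"
  have A_nonneg: "0 \<le> A" and B_nonneg: "0 \<le> B"
    by (simp_all add: A_def B_def i.sq_norms_nonneg j.sq_norms_nonneg)
  have "j.I z s = (\<Sum>k<n. cnj (i.I (w k) t) * j.I (w k) s)"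
    by (simp add: z_def j.I_sum j.I_scale)
  then have "cmod (j.I z s) \<le> (\<Sum>k<n. \<bar>cmod (i.I (w k) t)\<bar> * \<bar>cmod (j.I (w k) s)\<bar>)"
    using norm_sum[of "\<lambda>k. cnj (i.I (w k) t) * j.I (w k) s" "{..<n}"] by (simp add: norm_mult)
  also have "\<dots> \<le> sqrt A * sqrt B"
    using L2_set_mult_ineq[of "\<lambda>k. cmod (i.I (w k) t)" "\<lambda>k. cmod (j.I (w k) s)" "{..<n}"]
    by (simp add: A_def B_def i.sq_norms_def j.sq_norms_def L2_set_def)
  finally have "A \<le> sqrt A * sqrt B"
    using s \<open>A \<le> norm z\<close> by (simp add: B_def)
  then have "A\<^sup>2 \<le> (sqrt A * sqrt B)\<^sup>2"
    using A_nonneg by (rule power_mono)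
  also have "\<dots> = A * B"
    using A_nonneg B_nonneg by (simp add: power_mult_distrib)
  finally have "A \<le> B"
    using A_nonneg B_nonneg by (cases "A = 0") (auto simp: power2_eq_square mult_le_cancel_left)
  then show ?thesis unfolding A_def B_def by blast
qed

lemma controlled_on_UNIV_if_multiplier:
  assumes "CK_representation smX i" and "CK_representation smX j"
    and bound: "\<And>u s. cmod (apply_bcontfun (j (T u)) s) \<le> r * cmod (apply_bcontfun (j u) s)"
  shows "CK_representation.controlled_on i T r UNIV"
proof -
  interpret i: CK_representation smX i by fact
  interpret j: CK_representation smX j by fact
  have "\<exists>s. (cmod (i.I (T u) t))\<^sup>2 + i.sq_norms v n t \<le> r\<^sup>2 * (cmod (i.I u s))\<^sup>2 + i.sq_norms v n s"
    for u v n t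
  proof -
    define ru where "ru = smX (of_real r) u"
    obtain s'
      where s': "i.sq_norms (case_nat (T u) v) (Suc n) t \<le> j.sq_norms (case_nat (T u) v) (Suc n) s'"
      using sq_norms_transfer[OF i.CK_representation_axioms j.CK_representation_axioms] by blast
    obtain s
      where s: "j.sq_norms (case_nat ru v) (Suc n) s' \<le> i.sq_norms (case_nat ru v) (Suc n) s"
      using sq_norms_transfer[OF j.CK_representation_axioms i.CK_representation_axioms] by blast
    have "cmod (j.I (T u) s') \<le> cmod (j.I ru s')"
      using bound[of u s'] mult_right_mono[OF abs_ge_self, of "cmod (j.I u s')" r]
      by (simp add: ru_def j.I_scale norm_mult)
    then have "(cmod (j.I (T u) s'))\<^sup>2 \<le> (cmod (j.I ru s'))\<^sup>2"
      by (simp add: power_mono)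
    moreover have "(cmod (i.I ru s))\<^sup>2 = r\<^sup>2 * (cmod (i.I u s))\<^sup>2"
      by (simp add: ru_def i.I_scale norm_mult power_mult_distrib)
    ultimately show ?thesis
      using s s' unfolding i.sq_norms_Cons j.sq_norms_Cons by (intro exI[of _ s]) linarith
  qed
  then show ?thesis by (simp add: i.controlled_on_def)
qed

context CK_representation
begin

lemma closed_imp_compact: "closed (E :: 'k set) \<Longrightarrow> compact E"
  using compact_Int_closed[OF compact_UNIV, of E] by simp

lemma controlled_on_Inter:
  assumes "C \<noteq> {}" "chain\<^sub>\<subseteq> C"
    and closed: "\<And>E. E \<in> C \<Longrightarrow> closed E"
    and controlled: "\<And>E. E \<in> C \<Longrightarrow> controlled_on T r E"
  shows "controlled_on T r (\<Inter>C)"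
  unfolding controlled_on_def
proof (intro allI ballI)
  fix u v n t assume t: "t \<in> \<Inter>C"
  define c0 where "c0 = (cmod (I (T u) t))\<^sup>2 + sq_norms v n t"
  define G where "G s = r\<^sup>2 * (cmod (I u s))\<^sup>2 + sq_norms v n s" for s
  define D where "D = (\<lambda>E. E \<inter> {s. c0 \<le> G s}) ` C"
  have "closed {s. c0 \<le> G s}"
    unfolding G_def by (intro closed_Collect_le continuous_intros) simp
  then have "closed A" if "A \<in> D" for A
    using that closed by (auto simp: D_def)
  moreover have "{} \<notin> D"
    using controlled t by (fastforce simp: D_def controlled_on_def c0_def G_def)
  moreover have "chain\<^sub>\<subseteq> D"
    using \<open>chain\<^sub>\<subseteq> C\<close> by (auto simp: D_def chain_subset_def)
  ultimately have "\<Inter>D \<noteq> {}"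
    using closed_chain_Inter_nonempty[OF compact_UNIV] by blast
  then obtain s where "s \<in> \<Inter>D" by blast
  with \<open>C \<noteq> {}\<close> have "s \<in> \<Inter>C" "c0 \<le> G s" by (auto simp: D_def)
  then show "\<exists>s\<in>\<Inter>C.
      (cmod (I (T u) t))\<^sup>2 + sq_norms v n t \<le> r\<^sup>2 * (cmod (I u s))\<^sup>2 + sq_norms v n s"
    by (auto simp: c0_def G_def)
qed

lemma controlled_on_add_multiple:
  assumes "controlled_on T r E" "t \<in> E" "0 \<le> N"
  shows "\<exists>s\<in>E. (cmod (I (T u) t))\<^sup>2 + sq_norms v n t + N * (cmod (I w t))\<^sup>2
    \<le> r\<^sup>2 * (cmod (I u s))\<^sup>2 + sq_norms v n s + N * (cmod (I w s))\<^sup>2"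
proof -
  have sq: "(cmod (I (smX (of_real (sqrt N)) w) s))\<^sup>2 = N * (cmod (I w s))\<^sup>2" for s
    using \<open>0 \<le> N\<close> by (simp add: I_scale norm_mult power_mult_distrib)
  show ?thesis
    using assms(1,2) unfolding controlled_on_def
    by (metis (no_types) sq sq_norms_snoc add.assoc)
qed

lemma controlled_on_peak_set:
  assumes "closed E" "controlled_on T r E" "t0 \<in> E"
    and peak: "\<And>t. t \<in> E \<Longrightarrow> cmod (I w t) \<le> cmod (I w t0)"
  shows "controlled_on T r {t\<in>E. cmod (I w t) = cmod (I w t0)}"
  unfolding controlled_on_def
proof (intro allI ballI)
  fix u v n t assume t: "t \<in> {t\<in>E. cmod (I w t) = cmod (I w t0)}"
  define m where "m = cmod (I w t0)"
  define c0 where "c0 = (cmod (I (T u) t))\<^sup>2 + sq_norms v n t"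
  define G where "G s = r\<^sup>2 * (cmod (I u s))\<^sup>2 + sq_norms v n s" for s
  have contG: "continuous_on S G" for S
    unfolding G_def by (intro continuous_intros) simp
  show "\<exists>s\<in>{t\<in>E. cmod (I w t) = cmod (I w t0)}.
      (cmod (I (T u) t))\<^sup>2 + sq_norms v n t \<le> r\<^sup>2 * (cmod (I u s))\<^sup>2 + sq_norms v n s"
  proof (rule ccontr)
    assume "\<not> ?thesis"
    then have off_peak: "cmod (I w s) \<noteq> m" if "s \<in> E" "c0 \<le> G s" for s
      using that by (auto simp: m_def c0_def G_def)
    define A where "A = E \<inter> {s. c0 \<le> G s}"
    have "closed A"
      unfolding A_def using \<open>closed E\<close> contG by (intro closed_Int closed_Collect_le continuous_intros) auto
    moreover have "A \<noteq> {}"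
      using assms(2) t by (fastforce simp: controlled_on_def A_def c0_def G_def)
    ultimately obtain sA where sA: "sA \<in> A" "\<And>s. s \<in> A \<Longrightarrow> cmod (I w s) \<le> cmod (I w sA)"
      using continuous_attains_sup[OF closed_imp_compact, of A "\<lambda>s. cmod (I w s)"]
      by (auto intro: continuous_intros)
    define m' where "m' = cmod (I w sA)"
    have "m' < m"
      using peak off_peak sA(1) by (force simp: A_def m_def m'_def order.strict_iff_order)
    then have gap: "0 < m\<^sup>2 - m'\<^sup>2"
      by (simp add: m'_def power_strict_mono)
    obtain sG where sG: "\<And>s. G s \<le> G sG"
      using continuous_attains_sup[OF compact_UNIV _ contG] by auto
    have "c0 \<le> G sG"
      using sA(1) sG[of sA] by (simp add: A_def)
    \<comment> \<open>A weight N on w large enough to push the witness s into A, and then beyond sup G.\<close>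
    define N where "N = (G sG - c0 + 1) / (m\<^sup>2 - m'\<^sup>2)"
    have "0 \<le> N" and N: "N * (m\<^sup>2 - m'\<^sup>2) = G sG - c0 + 1"
      using gap \<open>c0 \<le> G sG\<close> by (simp_all add: N_def)
    obtain s where s: "s \<in> E" "c0 + N * m\<^sup>2 \<le> G s + N * (cmod (I w s))\<^sup>2"
      using controlled_on_add_multiple[OF assms(2) _ \<open>0 \<le> N\<close>, of t u v n w] t
      by (auto simp: c0_def G_def m_def)
    have "(cmod (I w s))\<^sup>2 \<le> m\<^sup>2"
      using peak[OF s(1)] by (simp add: m_def power_mono)
    then have "c0 \<le> G s"
      using s(2) mult_left_mono[OF _ \<open>0 \<le> N\<close>] by fastforce
    then have "(cmod (I w s))\<^sup>2 \<le> m'\<^sup>2"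
      using sA(2)[of s] s(1) by (simp add: A_def m'_def power_mono)
    then have "c0 + N * (m\<^sup>2 - m'\<^sup>2) \<le> G s"
      using s(2) mult_left_mono[OF _ \<open>0 \<le> N\<close>] by (fastforce simp: right_diff_distrib)
    then show False
      using N sG[of s] by linarith
  qed
qed

lemma norming_point_preserving_zeros:
  assumes "controlled_on T r UNIV"
  shows "\<exists>t0. cmod (I y t0) = norm y \<and> (\<forall>u. I u t0 = 0 \<longrightarrow> I (T u) t0 = 0)"
proof -
  define E0 where "E0 = {t. cmod (I y t) = norm y}"
  define \<A> where "\<A> = {E. closed E \<and> E \<noteq> {} \<and> E \<subseteq> E0 \<and> controlled_on T r E}"
  obtain t1 where t1: "cmod (I y t1) = norm y"
    using norm_attained by blast
  have "controlled_on T r {t\<in>UNIV. cmod (I y t) = cmod (I y t1)}"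
    using norm_I_le by (intro controlled_on_peak_set[OF closed_UNIV assms UNIV_I[of t1]]) (simp add: t1)
  then have "controlled_on T r E0"
    by (simp add: E0_def t1)
  moreover have "closed E0"
    unfolding E0_def by (intro closed_Collect_eq continuous_intros) simp_all
  moreover have "t1 \<in> E0"
    by (simp add: E0_def t1)
  ultimately have "E0 \<in> \<A>"
    unfolding \<A>_def by blast
  have "\<exists>E\<in>\<A>. \<forall>X\<in>\<A>. X \<subseteq> E \<longrightarrow> X = E"
  proof (rule subset_Zorn_minimal)
    fix \<C> assume \<C>: "\<C> \<noteq> {}" "\<C> \<subseteq> \<A>" "chain\<^sub>\<subseteq> \<C>"
    then have members: "closed E" "E \<noteq> {}" "E \<subseteq> E0" "controlled_on T r E" if "E \<in> \<C>" for E
      using that unfolding \<A>_def by blast+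
    have "closed (\<Inter>\<C>)"
      using members(1) by blast
    moreover have "\<Inter>\<C> \<noteq> {}"
      using members(1,2) \<C>(3) by (intro closed_chain_Inter_nonempty[OF compact_UNIV]) auto
    moreover have "\<Inter>\<C> \<subseteq> E0"
      using members(3) \<C>(1) by blast
    moreover have "controlled_on T r (\<Inter>\<C>)"
      using \<C>(1,3) members(1,4) by (rule controlled_on_Inter)
    ultimately show "\<Inter>\<C> \<in> \<A>"
      unfolding \<A>_def by blast
  qed (use \<open>E0 \<in> \<A>\<close> in blast)
  then obtain E where "E \<in> \<A>" and minimal: "\<And>X. X \<in> \<A> \<Longrightarrow> X \<subseteq> E \<Longrightarrow> X = E"
    by blast
  then have E: "closed E" "E \<noteq> {}" "E \<subseteq> E0" "controlled_on T r E"
    by (simp_all add: \<A>_def)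
  \<comment> \<open>The peak set in E of any w is again in \<A>, so by minimality it is all of E.\<close>
  have modulus_constant: "cmod (I w t) = cmod (I w t')" if "t \<in> E" "t' \<in> E" for w t t'
  proof -
    obtain tm where tm: "tm \<in> E" "\<And>t. t \<in> E \<Longrightarrow> cmod (I w t) \<le> cmod (I w tm)"
      using continuous_attains_sup[OF closed_imp_compact[OF E(1)] E(2), of "\<lambda>t. cmod (I w t)"]
      by (auto intro: continuous_intros)
    define P where "P = {t\<in>E. cmod (I w t) = cmod (I w tm)}"
    have "closed P"
      unfolding P_def using E(1) by (intro closed_Collect_conj) (auto intro!: closed_Collect_eq continuous_intros)
    moreover have "tm \<in> P" "P \<subseteq> E"
      by (auto simp: P_def tm(1))
    moreover have "controlled_on T r P"
      unfolding P_def using E(1,4) tm by (rule controlled_on_peak_set)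
    ultimately have "P \<in> \<A>"
      using E(3) unfolding \<A>_def by blast
    then have "P = E"
      using \<open>P \<subseteq> E\<close> by (rule minimal)
    then have "E \<subseteq> P"
      by simp
    then show ?thesis
      using that unfolding P_def by (metis (mono_tags, lifting) mem_Collect_eq subsetD)
  qed
  obtain t0 where "t0 \<in> E"
    using E(2) by blast
  have "I (T u) t0 = 0" if "I u t0 = 0" for u
  proof -
    obtain s where "s \<in> E"
      and "(cmod (I (T u) t0))\<^sup>2 + sq_norms v 0 t0 \<le> r\<^sup>2 * (cmod (I u s))\<^sup>2 + sq_norms v 0 s"
      using E(4) \<open>t0 \<in> E\<close> unfolding controlled_on_def by blast
    moreover have "I u s = 0"
      using modulus_constant[OF \<open>s \<in> E\<close> \<open>t0 \<in> E\<close>, of u] that by simp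
    ultimately show ?thesis by (simp add: sq_norms_def)
  qed
  moreover have "cmod (I y t0) = norm y"
    using E(3) \<open>t0 \<in> E\<close> by (auto simp: E0_def)
  ultimately show ?thesis by blast
qed

lemma commute_with_multiplication:
  assumes "controlled_on T r UNIV"
    and T_add: "\<And>x y. T (x + y) = T x + T y" and T_scale: "\<And>c x. T (smX c x) = smX c (T x)"
    and S: "\<And>x t. I (S x) t = g t * I x t"
  shows "T (S x) = S (T x)"
proof (rule ccontr)
  define y where "y = T (S x) - S (T x)"
  assume "T (S x) \<noteq> S (T x)"
  then have "y \<noteq> 0" by (simp add: y_def)
  obtain t0 where t0: "cmod (I y t0) = norm y" and zeros: "\<And>u. I u t0 = 0 \<Longrightarrow> I (T u) t0 = 0"
    using norming_point_preserving_zeros[OF assms(1)] by blast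
  have "I y t0 \<noteq> 0"
    using t0 \<open>y \<noteq> 0\<close> by auto
  have T_diff: "T (u - v) = T u - T v" for u v
    using T_add[of "u - v" v] by simp
  define c where "c = I (T y) t0 / I y t0"
  have scalar: "I (T u) t0 = c * I u t0" for u
  proof -
    define \<kappa> where "\<kappa> = I u t0 / I y t0"
    have "I (u - smX \<kappa> y) t0 = 0"
      using \<open>I y t0 \<noteq> 0\<close> by (simp add: \<kappa>_def I_diff I_scale)
    then have "I (T (u - smX \<kappa> y)) t0 = 0"
      by (rule zeros)
    then show ?thesis
      by (simp add: T_diff T_scale I_diff I_scale c_def \<kappa>_def)
  qed
  have "I y t0 = 0"
    by (simp add: y_def I_diff scalar S)
  with \<open>I y t0 \<noteq> 0\<close> show False ..
qed

end

theorem mainTheorem3: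
  fixes smA :: "complex \<Rightarrow> 'a::{real_normed_algebra_1,banach} \<Rightarrow> 'a"
    and smB :: "complex \<Rightarrow> 'b::{real_normed_algebra_1,banach} \<Rightarrow> 'b"
    and smX :: "complex \<Rightarrow> 'x::banach \<Rightarrow> 'x"
    and actL :: "'a \<Rightarrow> 'x \<Rightarrow> 'x"
    and actR :: "'x \<Rightarrow> 'b \<Rightarrow> 'x"
  assumes "unital_complex_banach_algebra smA"
    and "unital_complex_banach_algebra smB"
    and "complex_banach_space smX"
    and "left_banach_module smA smX actL"
    and "right_banach_module smB smX actR"
    and "left_function_module_on TYPE('k1::t2_space) smA smX actL"
    and "right_function_module_on TYPE('k2::t2_space) smB smX actR"
  shows "\<forall>a x b. actR (actL a x) b = actL a (actR x b)"
proof (intro allI)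
  fix a x b
  obtain i1 :: "'x \<Rightarrow> ('k1 \<Rightarrow>\<^sub>C complex)" and \<theta>1 :: "'a \<Rightarrow> ('k1 \<Rightarrow>\<^sub>C complex)"
    where i1: "CK_representation smX i1" and \<theta>1: "contractive_unital_hom_into_CK smA \<theta>1"
      and left: "\<And>a x t.
        apply_bcontfun (i1 (actL a x)) t = apply_bcontfun (\<theta>1 a) t * apply_bcontfun (i1 x) t"
    using assms(6) unfolding left_function_module_on_def CK_representation_def by blast
  obtain i2 :: "'x \<Rightarrow> ('k2 \<Rightarrow>\<^sub>C complex)" and \<theta>2 :: "'b \<Rightarrow> ('k2 \<Rightarrow>\<^sub>C complex)"
    where i2: "CK_representation smX i2"
      and right: "\<And>x b t.
        apply_bcontfun (i2 (actR x b)) t = apply_bcontfun (i2 x) t * apply_bcontfun (\<theta>2 b) t"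
    using assms(7) unfolding right_function_module_on_def CK_representation_def by blast
  have "cmod (apply_bcontfun (\<theta>1 a) s) \<le> norm a" for s
    using norm_bounded[of "\<theta>1 a" s] \<theta>1 unfolding contractive_unital_hom_into_CK_def
    by (meson order_trans)
  then have "cmod (apply_bcontfun (i1 (actL a u)) s) \<le> norm a * cmod (apply_bcontfun (i1 u) s)" for u s
    by (simp add: left norm_mult mult_right_mono)
  then have "CK_representation.controlled_on i2 (actL a) (norm a) UNIV"
    by (rule controlled_on_UNIV_if_multiplier[OF i2 i1])
  moreover have "actL a (x + y) = actL a x + actL a y" "actL a (smX c x) = smX c (actL a x)" for x y c
    using assms(4) unfolding left_banach_module_def by auto
  moreover have
    "apply_bcontfun (i2 (actR y b)) t = apply_bcontfun (\<theta>2 b) t * apply_bcontfun (i2 y) t" for y t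
    by (simp add: right mult.commute)
  ultimately show "actR (actL a x) b = actL a (actR x b)"
    using CK_representation.commute_with_multiplication
      [OF i2, of "actL a" "norm a" "\<lambda>y. actR y b" "apply_bcontfun (\<theta>2 b)" x]
    by simp
qed

end
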